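(* Let $t\ge 2$ be an even integer and let $p\ge 3$ be a prime with $(t-1)\mid(p-1)$; write $p-1=a(t-1)$ (so $a$ is even). Let $g$ be a primitive root of $\mathbb{F}_p$ (a generator of $\mathbb{F}_p^*$), and set $B=\{g,g^2,\dots,g^{a/2}\}\subseteq\mathbb{F}_p^*$ and $W=\{a,2a,\dots,(t-1)a\}\subseteq\mathbb{Z}$. For $f\in\mathbb{F}_p^*$ define $$P_f=\{(w,b)\in W\times B : g^w b=f\},\qquad N_f=\{(w,b)\in W\times B : g^w b=-f\}.$$ Then for every $f\in\mathbb{F}_p^*$ we have $\{|P_f|,|N_f|\}=\{0,1\}$; in particular each of $P_f$ and $N_f$ has at most one element.
   Context: $\mathbb{F}_p$ is the field with $p$ elements and $\mathbb{F}_p^*$ its multiplicative group. *)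

theory Defs
  imports "HOL-Number_Theory.Number_Theory"
begin

(* Elements of F_p are represented by their canonical residues in {0..<p};
   F_p^* is {1..<p}. *)

definition Bset :: "nat \<Rightarrow> nat \<Rightarrow> nat \<Rightarrow> nat set" where
  "Bset p g a = {g ^ i mod p | i. i \<in> {1..a div 2}}"

definition Wset :: "nat \<Rightarrow> nat \<Rightarrow> nat set" where
  "Wset t a = {k * a | k. k \<in> {1..t - 1}}"

definition Pset :: "nat \<Rightarrow> nat \<Rightarrow> nat \<Rightarrow> nat \<Rightarrow> nat \<Rightarrow> (nat \<times> nat) set" where
  "Pset p g t a f = {(w, b). w \<in> Wset t a \<and> b \<in> Bset p g a \<and> (g ^ w * b) mod p = f mod p}"

definition Nset :: "nat \<Rightarrow> nat \<Rightarrow> nat \<Rightarrow> nat \<Rightarrow> nat \<Rightarrow> (nat \<times> nat) set" where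
  "Nset p g t a f = {(w, b). w \<in> Wset t a \<and> b \<in> Bset p g a \<and> (g ^ w * b) mod p = (p - f mod p) mod p}"

end

theory Submission
  imports Defs
begin

(* Taking discrete logarithms to the base g, the products g^w b with w in W and b in B
   correspond to the exponents k a + i with 1 \<le> k \<le> t - 1 and 1 \<le> i \<le> a/2. Modulo
   p - 1 = a (t - 1) these exponents are pairwise distinct and are exactly the residues whose
   remainder mod a lies in {1..a/2}. Since -1 = g^((p-1)/2) and (p - 1)/2 = (a/2)(t - 1) is
   congruent to a/2 mod a (t - 1 being odd), negation shifts that remainder by a/2 and so
   exchanges the residues that are hit with those that are missed. *)

lemma primroot_power_cong_iff:
  assumes "prime p" "residue_primroot p g"
  shows "[g ^ m = g ^ n] (mod p) \<longleftrightarrow> [m = n] (mod p - 1)"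
proof -
  have "ord p g = p - 1" "coprime p g"
    using assms by (simp_all add: residue_primroot_def totient_prime)
  then show ?thesis by (simp add: order_divides_expdiff)
qed

lemma primroot_power_half_cong:
  assumes "prime p" "p > 2" "residue_primroot p g"
  shows "[int g ^ ((p - 1) div 2) = - 1] (mod int p)"
proof -
  define h where "h = g ^ ((p - 1) div 2)"
  have ord: "ord p g = p - 1" and "coprime p g"
    using assms by (simp_all add: residue_primroot_def totient_prime)
  then have "g > 0" using assms by (cases "g = 0") auto
  have "even (p - 1)" using assms prime_odd_nat by auto
  then have "h * h = g ^ (p - 1)"
    unfolding h_def by (metis dvd_mult_div_cancel mult_2 power_add)
  then have "[h * h = 1] (mod p)" using ord ord_works[of g p] by simp
  then have "[int h * int h = 1] (mod int p)"
    by (metis cong_int_iff of_nat_1 of_nat_mult)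
  moreover have "\<not> [int h = 1] (mod int p)"
  proof
    assume "[int h = 1] (mod int p)"
    then have "p - 1 dvd (p - 1) div 2"
      using ord ord_divides[of g "(p - 1) div 2" p] unfolding h_def
      by (metis cong_int_iff of_nat_1)
    moreover have "0 < (p - 1) div 2" "(p - 1) div 2 < p - 1" using assms by auto
    ultimately show False by (simp add: nat_dvd_not_less)
  qed
  ultimately show ?thesis
    using cong_square[of "int p" "int h"] assms \<open>g > 0\<close> by (simp add: h_def)
qed

lemma primroot_minus_power:
  assumes "prime p" "p > 2" "residue_primroot p g"
  shows "(p - g ^ n mod p) mod p = g ^ (n + (p - 1) div 2) mod p"
proof -
  have "[int g ^ (n + (p - 1) div 2) = int g ^ n * - 1] (mod int p)"
    unfolding power_add using primroot_power_half_cong[OF assms] by (rule cong_mult[OF cong_refl])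
  then have "int (g ^ (n + (p - 1) div 2) mod p) = (- int (g ^ n)) mod int p"
    by (simp add: cong_def zmod_int)
  also have "\<dots> = int ((p - g ^ n mod p) mod p)"
    using assms by (simp add: zmod_int of_nat_diff zmod_zminus1_eq_if)
  finally show ?thesis by simp
qed

lemma mult_add_cong_iff:
  fixes a m k i x :: nat
  assumes "i < a"
  shows "[k * a + i = x] (mod a * m) \<longleftrightarrow> i = x mod a \<and> [k = x div a] (mod m)"
proof -
  have "[k * a + i = x] (mod a * m) \<Longrightarrow> i = x mod a"
    using assms cong_dvd_modulus_nat[of "k * a + i" x "a * m" a] by (simp add: cong_def)
  moreover have "[k * a + x mod a = x] (mod a * m) \<longleftrightarrow> [k = x div a] (mod m)"
  proof -
    have "[k * a + x mod a = x] (mod a * m) \<longleftrightarrow>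
        [a * k + x mod a = a * (x div a) + x mod a] (mod a * m)"
      by (simp add: mult.commute)
    also have "\<dots> \<longleftrightarrow> [a * k = a * (x div a)] (mod a * m)"
      by (rule cong_add_rcancel_nat)
    also have "\<dots> \<longleftrightarrow> [k = x div a] (mod m)"
      using assms by (simp add: cong_def mod_mult_mult1)
    finally show ?thesis .
  qed
  ultimately show ?thesis by blast
qed

lemma card_cong_atLeastAtMost:
  fixes m y :: nat
  assumes "m > 0"
  shows "card {k \<in> {1..m}. [k = y] (mod m)} = 1"
proof -
  define k0 where "k0 = (if y mod m = 0 then m else y mod m)"
  have "{k \<in> {1..m}. [k = y] (mod m)} = {k0}"
  proof (intro equalityI subsetI)
    fix k assume "k \<in> {k \<in> {1..m}. [k = y] (mod m)}"
    then have "k \<in> {1..m}" "k mod m = y mod m" by (auto simp: cong_def)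
    then show "k \<in> {k0}"
      unfolding k0_def by (cases "k = m") auto
  qed (use assms in \<open>auto simp: k0_def cong_def\<close>)
  then show ?thesis by simp
qed

lemma mod_add_half_in_iff:
  fixes a x :: nat
  assumes "even a" "a > 0"
  shows "(x + a div 2) mod a \<in> {1..a div 2} \<longleftrightarrow> x mod a \<notin> {1..a div 2}"
proof -
  define r where "r = x mod a"
  have "r < a" using assms unfolding r_def by simp
  have "(x + a div 2) mod a = (r + a div 2) mod a"
    unfolding r_def by (simp add: mod_add_left_eq)
  also have "\<dots> = (if r + a div 2 < a then r + a div 2 else r - a div 2)"
    using \<open>r < a\<close> assms by (auto simp: le_mod_geq)
  finally show ?thesis using \<open>r < a\<close> assms unfolding r_def[symmetric] by auto
qed

lemma half_mod_odd_multiple: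
  fixes a m :: nat
  assumes "even (a * m)" "odd m"
  shows "a * m div 2 mod a = a div 2"
proof -
  obtain c s where "a = 2 * c" "m = 2 * s + 1"
    using assms by (auto elim!: evenE oddE)
  then have "a * m div 2 = a div 2 + s * a" by (simp add: algebra_simps)
  then show ?thesis using \<open>a = 2 * c\<close> by simp
qed

definition representations :: "nat \<Rightarrow> nat \<Rightarrow> nat \<Rightarrow> nat \<Rightarrow> nat \<Rightarrow> (nat \<times> nat) set" where
  "representations p g t a y = {(w, b). w \<in> Wset t a \<and> b \<in> Bset p g a \<and> (g ^ w * b) mod p = y}"

lemma representations_primroot_power:
  assumes "prime p" "residue_primroot p g" "p - 1 = a * (t - 1)"
  shows "representations p g t a (g ^ x mod p) =
    (\<lambda>k. (k * a, g ^ (x mod a) mod p)) `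
      {k \<in> {1..t - 1}. x mod a \<in> {1..a div 2} \<and> [k = x div a] (mod t - 1)}"
proof -
  have "a > 0" using prime_gt_1_nat[OF assms(1)] assms(3) by (cases "a = 0") auto
  have "(g ^ (k * a) * (g ^ i mod p)) mod p = g ^ x mod p \<longleftrightarrow>
      i = x mod a \<and> [k = x div a] (mod t - 1)" if "i \<in> {1..a div 2}" for k i
  proof -
    have "i < a" using that \<open>a > 0\<close> by auto
    have "(g ^ (k * a) * (g ^ i mod p)) mod p = g ^ (k * a + i) mod p"
      by (simp add: mod_mult_right_eq power_add)
    then show ?thesis
      using primroot_power_cong_iff[OF assms(1,2)] mult_add_cong_iff[OF \<open>i < a\<close>] assms(3)
      by (simp add: cong_def)
  qed
  then show ?thesis
    unfolding representations_def Wset_def Bset_def by fastforce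
qed

lemma card_representations_primroot_power:
  assumes "prime p" "residue_primroot p g" "p - 1 = a * (t - 1)" "t \<ge> 2"
  shows "card (representations p g t a (g ^ x mod p)) = (if x mod a \<in> {1..a div 2} then 1 else 0)"
proof -
  have "a > 0" using prime_gt_1_nat[OF assms(1)] assms(3) by (cases "a = 0") auto
  then have "inj (\<lambda>k. (k * a, g ^ (x mod a) mod p))" by (auto intro: injI)
  then show ?thesis
    using card_cong_atLeastAtMost[of "t - 1" "x div a"] assms(4)
    by (cases "x mod a \<in> {1..a div 2}")
      (auto simp: representations_primroot_power[OF assms(1-3)] card_image inj_on_subset)
qed

theorem lemma1:
  fixes t p a g f :: nat
  assumes "even t" and "t \<ge> 2"
    and "prime p" and "p \<ge> 3"
    and "p - 1 = a * (t - 1)"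
    and "residue_primroot p g"
    and "f \<in> {1..<p}"
  shows "{card (Pset p g t a f), card (Nset p g t a f)} = {0, 1}"
proof -
  have "f \<in> (\<lambda>i. g ^ i mod p) ` {..<totient p}"
    using residue_primroot_is_generator[OF prime_gt_1_nat assms(6)] assms(3,7)
    by (simp add: bij_betw_def totatives_prime)
  then obtain e where e: "f = g ^ e mod p" by blast
  have "odd p" "odd (t - 1)" using assms prime_odd_nat by auto
  then have "even (a * (t - 1))" using assms(5)[symmetric] by simp
  then have "even a" "a > 0" using \<open>odd (t - 1)\<close> assms(4,5) by (auto intro: Nat.gr0I)
  have "(e + (p - 1) div 2) mod a = (e + a div 2) mod a"
    using half_mod_odd_multiple[OF \<open>even (a * (t - 1))\<close> \<open>odd (t - 1)\<close>] assms(5)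
    by (metis mod_add_right_eq)
  moreover have "Pset p g t a f = representations p g t a (g ^ e mod p)"
    unfolding Pset_def representations_def e by simp
  moreover have "Nset p g t a f = representations p g t a (g ^ (e + (p - 1) div 2) mod p)"
    using primroot_minus_power[OF assms(3) _ assms(6), of e] assms(4)
    unfolding Nset_def representations_def e by simp
  ultimately show ?thesis
    using card_representations_primroot_power[OF assms(3,6,5,2)]
      mod_add_half_in_iff[OF \<open>even a\<close> \<open>a > 0\<close>, of e]
    by auto
qed

end
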